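(* Let $L$ be any language over alphabet $\Sigma$. The following two statements are logically equivalent. 1. $L\in\mathrm{1QFA}/Rn$. 2. There exist a 1qfa $M$ with read-only tape tracks, an advice alphabet $\Gamma$, a series $\Phi=\{|\phi_n\rangle\}_{n\in\mathbb{N}}$ of quantum advice states ($|\phi_n\rangle$ a normalized state in $\mathrm{span}\{|s\rangle\mid s\in\Gamma^n\}$), and an error bound $\varepsilon\in[0,1/2)$ satisfying $\Pr_M\big[M(\genfrac{[}{]}{0pt}{}{x}{\phi_{|x|}})=L(x)\big]\geq1-\varepsilon$ for any input $x\in\Sigma^*$.
   Context: A 1qfa is a one-way measure-many quantum finite automaton. For equal-length strings $x,y$, $\genfrac{[}{]}{0pt}{}{x}{y}$ is the two-track string with $x$ on the upper track and $y$ on the lower track. $\mathrm{1QFA}/Rn$ is the family of languages $L$ for which there exist a 1qfa $M$, $\varepsilon\in[0,1/2)$, an advice alphabet $\Gamma$ and randomized advice $\{D_n\}$ ($D_n$ a distribution on $\Gamma^n$) such that for every $n$ and $x\in\Sigma^n$, $M$ on $\genfrac{[}{]}{0pt}{}{x}{y}$ with $y\sim D_n$ outputs $L(x)$ with probability at least $1-\varepsilon$. With quantum advice $|\phi_n\rangle=\sum_{s\in\Gamma^n}\alpha_s|s\rangle$, $|\genfrac{[}{]}{0pt}{}{x}{\phi_n}\rangle=\sum_s\alpha_s|\genfrac{[}{]}{0pt}{}{x}{s}\rangle$; the 1qfa works on the space spanned by $|q\rangle|y\rangle$ ($q$ an inner state, $y\in\Gamma^n$), starts in $|q_0\rangle|\phi_n\rangle$,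 and at step $i$ applies a unitary acting on its inner state and the $i$th tape cell; since both tracks are read-only it cannot change the advice content. Measurements are on the inner-state register after each step, and $\Pr_M[M(\genfrac{[}{]}{0pt}{}{x}{\phi_{|x|}})=L(x)]$ is the total probability of outputting $L(x)$. *)

theory Defs
  imports Complex_Main "HOL-Probability.Probability_Mass_Function"
begin

text \<open>Tape symbols of a 1qfa with a two-track (input / advice) tape:
  the left endmarker, the right endmarker, and two-track cells (input symbol, advice symbol).\<close>
datatype ('a, 'g) tsym = LEnd | REnd | Cell 'a 'g

text \<open>A measure-many 1qfa. Inner states and advice symbols are drawn from nat
  (finite subsets of nat are used for the state set and the advice alphabet).
  delta s q p is the matrix entry of the unitary U_s applied when scanning s.\<close>
record 'a qfa =
  states :: "nat set"
  init   :: nat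
  accs   :: "nat set"
  rejs   :: "nat set"
  delta  :: "('a, nat) tsym \<Rightarrow> nat \<Rightarrow> nat \<Rightarrow> complex"

definition unitary_on :: "nat set \<Rightarrow> (nat \<Rightarrow> nat \<Rightarrow> complex) \<Rightarrow> bool" where
  "unitary_on Q U \<longleftrightarrow>
     (\<forall>p\<in>Q. \<forall>p'\<in>Q. (\<Sum>q\<in>Q. cnj (U q p) * U q p') = (if p = p' then 1 else 0))"

definition tape_syms :: "nat set \<Rightarrow> ('a, nat) tsym set" where
  "tape_syms \<Gamma> = {LEnd, REnd} \<union> {Cell a g | a g. g \<in> \<Gamma>}"

definition is_1qfa :: "'a qfa \<Rightarrow> nat set \<Rightarrow> bool" where
  "is_1qfa M \<Gamma> \<longleftrightarrow> finite (states M) \<and> init M \<in> states M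
     \<and> accs M \<subseteq> states M \<and> rejs M \<subseteq> states M \<and> accs M \<inter> rejs M = {}
     \<and> init M \<notin> accs M \<union> rejs M
     \<and> (\<forall>s\<in>tape_syms \<Gamma>. unitary_on (states M) (delta M s))"

text \<open>Global state: amplitude of |q>|y> (inner state q, advice content y).\<close>
type_synonym gstate = "nat \<Rightarrow> nat list \<Rightarrow> complex"

text \<open>One step: apply the unitary determined by the currently scanned cell (whose advice
  component depends on the advice content y), acting on the inner state only.\<close>
definition qstep :: "'a qfa \<Rightarrow> (nat list \<Rightarrow> ('a, nat) tsym) \<Rightarrow> gstate \<Rightarrow> gstate" where
  "qstep M c \<Psi> = (\<lambda>q y. \<Sum>p\<in>states M. delta M (c y) q p * \<Psi> p y)"

definition restrict_states :: "nat set \<Rightarrow> gstate \<Rightarrow> gstate" where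
  "restrict_states A \<Psi> = (\<lambda>q y. if q \<in> A then \<Psi> q y else 0)"

definition mass :: "nat list set \<Rightarrow> nat set \<Rightarrow> gstate \<Rightarrow> real" where
  "mass Y A \<Psi> = (\<Sum>y\<in>Y. \<Sum>q\<in>A. (cmod (\<Psi> q y))\<^sup>2)"

fun out_prob :: "'a qfa \<Rightarrow> nat list set \<Rightarrow> nat set \<Rightarrow> (nat list \<Rightarrow> ('a, nat) tsym) list
                  \<Rightarrow> gstate \<Rightarrow> real" where
  "out_prob M Y A [] \<Psi> = 0"
| "out_prob M Y A (c # cs) \<Psi> =
     (let \<Psi>' = qstep M c \<Psi>
      in mass Y A \<Psi>' + out_prob M Y A cs (restrict_states (states M - accs M - rejs M) \<Psi>'))"

definition tape :: "'a list \<Rightarrow> (nat list \<Rightarrow> ('a, nat) tsym) list" where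
  "tape x = [\<lambda>y. LEnd] @ map (\<lambda>i y. Cell (x ! i) (y ! i)) [0..<length x] @ [\<lambda>y. REnd]"

definition adv_strings :: "nat set \<Rightarrow> nat \<Rightarrow> nat list set" where
  "adv_strings \<Gamma> n = {y. set y \<subseteq> \<Gamma> \<and> length y = n}"

definition prob_output :: "'a qfa \<Rightarrow> nat set \<Rightarrow> 'a list \<Rightarrow> (nat list \<Rightarrow> complex) \<Rightarrow> bool \<Rightarrow> real" where
  "prob_output M \<Gamma> x \<phi> b =
     out_prob M (adv_strings \<Gamma> (length x)) (if b then accs M else rejs M) (tape x)
       (\<lambda>q y. if q = init M then \<phi> y else 0)"

definition qadvice :: "nat set \<Rightarrow> nat \<Rightarrow> (nat list \<Rightarrow> complex) \<Rightarrow> bool" where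
  "qadvice \<Gamma> n \<phi> \<longleftrightarrow> (\<forall>y. y \<notin> adv_strings \<Gamma> n \<longrightarrow> \<phi> y = 0)
     \<and> (\<Sum>y\<in>adv_strings \<Gamma> n. (cmod (\<phi> y))\<^sup>2) = 1"

definition basis_adv :: "nat list \<Rightarrow> nat list \<Rightarrow> complex" where
  "basis_adv y = (\<lambda>z. if z = y then 1 else 0)"

definition in_1QFA_Rn :: "'a list set \<Rightarrow> bool" where
  "in_1QFA_Rn L \<longleftrightarrow> (\<exists>(M :: 'a qfa) \<Gamma> \<epsilon> (D :: nat \<Rightarrow> nat list pmf).
     finite \<Gamma> \<and> is_1qfa M \<Gamma> \<and> 0 \<le> \<epsilon> \<and> \<epsilon> < 1/2
     \<and> (\<forall>n. set_pmf (D n) \<subseteq> adv_strings \<Gamma> n)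
     \<and> (\<forall>x. measure_pmf.expectation (D (length x))
              (\<lambda>y. prob_output M \<Gamma> x (basis_adv y) (x \<in> L)) \<ge> 1 - \<epsilon>))"

end

theory Submission
  imports Defs
begin

text \<open>Since both tape tracks are read-only, every step acts on the inner state separately for
  each advice content y. A run on the superposition \<open>\<Sum>\<^sub>y \<alpha>\<^sub>y |y\<rangle>\<close> therefore splits into
  non-interfering runs on the basis states \<open>|y\<rangle>\<close>, and its output probability is the average
  \<open>\<Sum>\<^sub>y |\<alpha>\<^sub>y|\<^sup>2 p\<^sub>y\<close> of the output probabilities \<open>p\<^sub>y\<close> on classical advice y. Hence quantum advice
  with amplitudes \<open>\<alpha>\<^sub>y\<close> and randomized advice drawn with probabilities \<open>|\<alpha>\<^sub>y|\<^sup>2\<close> simulate each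
  other: use amplitudes \<open>\<surd>(D y)\<close> in one direction and the distribution \<open>|\<alpha>\<^sub>y|\<^sup>2\<close> in the other.\<close>

lemma finite_adv_strings: "finite \<Gamma> \<Longrightarrow> finite (adv_strings \<Gamma> n)"
  unfolding adv_strings_def by (drule finite_lists_length_eq) simp

lemma out_prob_sum_singletons:
  "finite Y \<Longrightarrow> out_prob M Y A cs \<Psi> = (\<Sum>y\<in>Y. out_prob M {y} A cs \<Psi>)"
  by (induction cs arbitrary: \<Psi>) (simp_all add: Let_def mass_def sum.distrib)

lemma out_prob_singleton_cong:
  assumes "\<And>q. \<Psi> q y = \<Psi>' q y"
  shows "out_prob M {y} A cs \<Psi> = out_prob M {y} A cs \<Psi>'"
  using assms
proof (induction cs arbitrary: \<Psi> \<Psi>')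
  case Nil
  then show ?case by simp
next
  case (Cons c cs)
  let ?R = "restrict_states (states M - accs M - rejs M)"
  have step: "qstep M c \<Psi> q y = qstep M c \<Psi>' q y" for q
    using Cons.prems by (simp add: qstep_def)
  then have "mass {y} A (qstep M c \<Psi>) = mass {y} A (qstep M c \<Psi>')"
    by (simp add: mass_def)
  moreover have "?R (qstep M c \<Psi>) q y = ?R (qstep M c \<Psi>') q y" for q
    using step by (simp add: restrict_states_def)
  ultimately show ?case
    using Cons.IH[of "?R (qstep M c \<Psi>)" "?R (qstep M c \<Psi>')"] by (simp add: Let_def)
qed

lemma out_prob_scale:
  "out_prob M Y A cs (\<lambda>q z. k * \<Psi> q z) = (cmod k)\<^sup>2 * out_prob M Y A cs \<Psi>"
proof (induction cs arbitrary: \<Psi>)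
  case Nil
  then show ?case by simp
next
  case (Cons c cs)
  have "qstep M c (\<lambda>q z. k * \<Psi> q z) = (\<lambda>q z. k * qstep M c \<Psi> q z)"
    by (simp add: qstep_def sum_distrib_left mult.left_commute)
  moreover have "mass Y A (\<lambda>q z. k * F q z) = (cmod k)\<^sup>2 * mass Y A F" for F
    by (simp add: mass_def norm_mult power_mult_distrib sum_distrib_left)
  moreover have "restrict_states S (\<lambda>q z. k * F q z) = (\<lambda>q z. k * restrict_states S F q z)" for S F
    by (auto simp: restrict_states_def fun_eq_iff)
  ultimately show ?case
    by (simp add: Let_def Cons.IH distrib_left)
qed

lemma out_prob_zero: "out_prob M Y A cs (\<lambda>q z. 0) = 0"
  using out_prob_scale[of M Y A cs 0 "\<lambda>q z. 0"] by simp

lemma out_prob_singleton_vanishing: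
  "(\<And>q. \<Psi> q y = 0) \<Longrightarrow> out_prob M {y} A cs \<Psi> = 0"
  by (metis out_prob_singleton_cong out_prob_zero)

lemma prob_output_basis_adv:
  assumes "finite \<Gamma>" and y: "y \<in> adv_strings \<Gamma> (length x)"
  shows "prob_output M \<Gamma> x (basis_adv y) b =
    out_prob M {y} (if b then accs M else rejs M) (tape x)
      (\<lambda>q z. if q = init M then basis_adv y z else 0)"
proof -
  let ?Y = "adv_strings \<Gamma> (length x)"
  let ?out = "\<lambda>y'. out_prob M {y'} (if b then accs M else rejs M) (tape x)
      (\<lambda>q z. if q = init M then basis_adv y z else 0)"
  have fin: "finite ?Y"
    using assms(1) by (rule finite_adv_strings)
  have "prob_output M \<Gamma> x (basis_adv y) b = (\<Sum>y'\<in>?Y. ?out y')"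
    unfolding prob_output_def using fin by (rule out_prob_sum_singletons)
  also have "\<dots> = ?out y + (\<Sum>y'\<in>?Y - {y}. ?out y')"
    using fin y by (rule sum.remove)
  also have "(\<Sum>y'\<in>?Y - {y}. ?out y') = 0"
    by (intro sum.neutral ballI out_prob_singleton_vanishing) (simp add: basis_adv_def)
  finally show ?thesis by simp
qed

theorem prob_output_superposition:
  assumes "finite \<Gamma>"
  shows "prob_output M \<Gamma> x \<phi> b =
    (\<Sum>y\<in>adv_strings \<Gamma> (length x). (cmod (\<phi> y))\<^sup>2 * prob_output M \<Gamma> x (basis_adv y) b)"
proof -
  let ?Y = "adv_strings \<Gamma> (length x)"
  let ?A = "if b then accs M else rejs M"
  let ?start = "\<lambda>\<psi> q z. if q = init M then \<psi> z else (0::complex)"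
  have fin: "finite ?Y"
    using assms by (rule finite_adv_strings)
  have "prob_output M \<Gamma> x \<phi> b = (\<Sum>y\<in>?Y. out_prob M {y} ?A (tape x) (?start \<phi>))"
    unfolding prob_output_def using fin by (rule out_prob_sum_singletons)
  also have "\<dots> = (\<Sum>y\<in>?Y. out_prob M {y} ?A (tape x) (\<lambda>q z. \<phi> y * ?start (basis_adv y) q z))"
    by (intro sum.cong refl out_prob_singleton_cong) (simp add: basis_adv_def)
  also have "\<dots> = (\<Sum>y\<in>?Y. (cmod (\<phi> y))\<^sup>2 * prob_output M \<Gamma> x (basis_adv y) b)"
  proof (rule sum.cong[OF refl])
    fix y
    assume "y \<in> ?Y"
    then show "out_prob M {y} ?A (tape x) (\<lambda>q z. \<phi> y * ?start (basis_adv y) q z)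
        = (cmod (\<phi> y))\<^sup>2 * prob_output M \<Gamma> x (basis_adv y) b"
      by (simp only: out_prob_scale prob_output_basis_adv[OF assms])
  qed
  finally show ?thesis .
qed

lemma expectation_prob_output_basis_adv:
  assumes "finite \<Gamma>" and "set_pmf D \<subseteq> adv_strings \<Gamma> (length x)"
  shows "measure_pmf.expectation D (\<lambda>y. prob_output M \<Gamma> x (basis_adv y) b)
       = (\<Sum>y\<in>adv_strings \<Gamma> (length x). pmf D y * prob_output M \<Gamma> x (basis_adv y) b)"
  using assms by (subst integral_measure_pmf[OF finite_adv_strings]) auto

lemma qadvice_sqrt_pmf:
  assumes "finite \<Gamma>" and "set_pmf D \<subseteq> adv_strings \<Gamma> n"
  shows "qadvice \<Gamma> n (\<lambda>y. of_real (sqrt (pmf D y)))"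
  using assms sum_pmf_eq_1[OF finite_adv_strings]
  by (auto simp: qadvice_def set_pmf_iff)

lemma prob_output_sqrt_pmf:
  assumes "finite \<Gamma>" and "set_pmf D \<subseteq> adv_strings \<Gamma> (length x)"
  shows "prob_output M \<Gamma> x (\<lambda>y. of_real (sqrt (pmf D y))) b
       = measure_pmf.expectation D (\<lambda>y. prob_output M \<Gamma> x (basis_adv y) b)"
  using assms
  by (subst prob_output_superposition) (simp_all add: expectation_prob_output_basis_adv)

definition qadvice_pmf :: "(nat list \<Rightarrow> complex) \<Rightarrow> nat list pmf" where
  "qadvice_pmf \<phi> = embed_pmf (\<lambda>y. (cmod (\<phi> y))\<^sup>2)"

lemma pmf_qadvice_pmf:
  assumes "finite \<Gamma>" and \<phi>: "qadvice \<Gamma> n \<phi>"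
  shows "pmf (qadvice_pmf \<phi>) y = (cmod (\<phi> y))\<^sup>2"
  unfolding qadvice_pmf_def
proof (rule pmf_embed_pmf)
  have "(\<integral>\<^sup>+y. ennreal ((cmod (\<phi> y))\<^sup>2) \<partial>count_space UNIV)
      = (\<Sum>y\<in>adv_strings \<Gamma> n. ennreal ((cmod (\<phi> y))\<^sup>2))"
    using \<phi> by (intro nn_integral_count_space'[OF finite_adv_strings[OF assms(1)]])
      (auto simp: qadvice_def)
  also have "\<dots> = 1"
    using \<phi> by (simp add: sum_ennreal qadvice_def)
  finally show "(\<integral>\<^sup>+y. ennreal ((cmod (\<phi> y))\<^sup>2) \<partial>count_space UNIV) = 1" .
qed simp

lemma set_pmf_qadvice_pmf:
  assumes "finite \<Gamma>" and "qadvice \<Gamma> n \<phi>"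
  shows "set_pmf (qadvice_pmf \<phi>) \<subseteq> adv_strings \<Gamma> n"
  using assms by (auto simp: set_pmf_iff pmf_qadvice_pmf[OF assms] qadvice_def)

lemma expectation_qadvice_pmf:
  assumes "finite \<Gamma>" and "qadvice \<Gamma> (length x) \<phi>"
  shows "measure_pmf.expectation (qadvice_pmf \<phi>) (\<lambda>y. prob_output M \<Gamma> x (basis_adv y) b)
       = prob_output M \<Gamma> x \<phi> b"
  using assms
  by (subst prob_output_superposition)
    (simp_all add: expectation_prob_output_basis_adv set_pmf_qadvice_pmf pmf_qadvice_pmf)

lemma quantum_advice_if_in_1QFA_Rn:
  assumes "in_1QFA_Rn (L :: 'a list set)"
  shows "\<exists>(M :: 'a qfa) \<Gamma> (\<Phi> :: nat \<Rightarrow> nat list \<Rightarrow> complex) \<epsilon>.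
       finite \<Gamma> \<and> is_1qfa M \<Gamma> \<and> (\<forall>n. qadvice \<Gamma> n (\<Phi> n))
       \<and> 0 \<le> \<epsilon> \<and> \<epsilon> < 1/2
       \<and> (\<forall>x. prob_output M \<Gamma> x (\<Phi> (length x)) (x \<in> L) \<ge> 1 - \<epsilon>)"
proof -
  obtain M :: "'a qfa" and \<Gamma> \<epsilon> D where
    \<Gamma>: "finite \<Gamma>" and "is_1qfa M \<Gamma>" "0 \<le> \<epsilon>" "\<epsilon> < 1/2"
    and D: "\<And>n. set_pmf (D n) \<subseteq> adv_strings \<Gamma> n"
    and correct: "\<And>x. measure_pmf.expectation (D (length x))
              (\<lambda>y. prob_output M \<Gamma> x (basis_adv y) (x \<in> L)) \<ge> 1 - \<epsilon>"
    using assms unfolding in_1QFA_Rn_def by blast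
  define \<Phi> where "\<Phi> n = (\<lambda>y. of_real (sqrt (pmf (D n) y)) :: complex)" for n
  have "prob_output M \<Gamma> x (\<Phi> (length x)) (x \<in> L) \<ge> 1 - \<epsilon>" for x
    using correct[of x] by (simp add: \<Phi>_def prob_output_sqrt_pmf[OF \<Gamma> D])
  moreover have "qadvice \<Gamma> n (\<Phi> n)" for n
    unfolding \<Phi>_def using \<Gamma> D by (rule qadvice_sqrt_pmf)
  ultimately show ?thesis
    using \<Gamma> \<open>is_1qfa M \<Gamma>\<close> \<open>0 \<le> \<epsilon>\<close> \<open>\<epsilon> < 1/2\<close> by blast
qed

lemma in_1QFA_Rn_if_quantum_advice:
  assumes \<Gamma>: "finite \<Gamma>" and "is_1qfa M \<Gamma>" and \<Phi>: "\<And>n. qadvice \<Gamma> n (\<Phi> n)"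
    and "0 \<le> \<epsilon>" "\<epsilon> < 1/2"
    and correct: "\<And>x. prob_output M \<Gamma> x (\<Phi> (length x)) (x \<in> L) \<ge> 1 - \<epsilon>"
  shows "in_1QFA_Rn L"
proof -
  have "measure_pmf.expectation (qadvice_pmf (\<Phi> (length x)))
      (\<lambda>y. prob_output M \<Gamma> x (basis_adv y) (x \<in> L)) \<ge> 1 - \<epsilon>" for x
    using correct[of x] by (simp add: expectation_qadvice_pmf[OF \<Gamma> \<Phi>])
  moreover have "set_pmf (qadvice_pmf (\<Phi> n)) \<subseteq> adv_strings \<Gamma> n" for n
    using \<Gamma> \<Phi> by (rule set_pmf_qadvice_pmf)
  ultimately show ?thesis
    unfolding in_1QFA_Rn_def using assms
    by (intro exI[of _ M] exI[of _ \<Gamma>] exI[of _ \<epsilon>] exI[of _ "\<lambda>n. qadvice_pmf (\<Phi> n)"]) simp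
qed

theorem proposition5p4:
  fixes L :: "'a::finite list set"
  shows "in_1QFA_Rn L \<longleftrightarrow>
    (\<exists>(M :: 'a qfa) \<Gamma> (\<Phi> :: nat \<Rightarrow> nat list \<Rightarrow> complex) \<epsilon>.
       finite \<Gamma> \<and> is_1qfa M \<Gamma> \<and> (\<forall>n. qadvice \<Gamma> n (\<Phi> n))
       \<and> 0 \<le> \<epsilon> \<and> \<epsilon> < 1/2
       \<and> (\<forall>x. prob_output M \<Gamma> x (\<Phi> (length x)) (x \<in> L) \<ge> 1 - \<epsilon>))"
  using quantum_advice_if_in_1QFA_Rn in_1QFA_Rn_if_quantum_advice by metis

end
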